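(* Let $K\to K'$ be an algebraically pure morphism of fields and $x=(x_1,\ldots,x_n)$. Let $J_1,\ldots,J_p$ be subsets of $\{1,\ldots,n\}$, $x_{J_i}=(x_k)_{k\in J_i}$, and $A_i=K[x_{J_i}]_{(x_{J_i})}$, $A'_i=K'[x_{J_i}]_{(x_{J_i})}$ for $i\in\{1,\ldots,p\}$. Set $\mathcal{N}=A_1\times\cdots\times A_p$ and $\mathcal{N}'=A'_1\times\cdots\times A'_p$. Let $f$ be a finite system of polynomials in $K[x]_{(x)}[Y]$, $Y=(Y_1,\ldots,Y_p)$, and let $\hat y\in\mathcal{N}'$ satisfy $f(\hat y)=0$ (in $K'[x]_{(x)}$). Then there exists $y\in\mathcal{N}$ such that $f(y)=0$ and $\operatorname{ord} y_i=\operatorname{ord}\hat y_i$ for all $i\in\{1,\ldots,p\}$.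
   Context: A ring morphism $A\to B$ is called algebraically pure if every finite system of polynomial equations over $A$ which has a solution in $B$ also has a solution in $A$. Here $K[x_{J}]_{(x_J)}$ denotes the localization of the polynomial ring $K[x_J]$ at the maximal ideal generated by the variables $x_J$. For an element $g$ of such a local ring (or of a power series ring), $\operatorname{ord} g$ is its order with respect to the maximal ideal $(x)$, i.e. the largest $k$ with $g\in (x)^k$ (equivalently the least degree of a monomial with nonzero coefficient in its power series expansion), with $\operatorname{ord}0=\infty$. *)

theory Defs
  imports "HOL-Library.Poly_Mapping" "HOL-Computational_Algebra.Fraction_Field"
          "HOL-Library.Extended_Nat"
begin

type_synonym 'a mpoly = "(nat \<Rightarrow>\<^sub>0 nat) \<Rightarrow>\<^sub>0 'a"

definition mpeval :: "'r::comm_semiring_1 mpoly \<Rightarrow> (nat \<Rightarrow> 'r) \<Rightarrow> 'r" where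
  "mpeval P a = (\<Sum>m\<in>Poly_Mapping.keys P. Poly_Mapping.lookup P m * (\<Prod>i\<in>Poly_Mapping.keys m. a i ^ Poly_Mapping.lookup (m::nat \<Rightarrow>\<^sub>0 nat) i))"

definition mvars :: "'r::zero mpoly \<Rightarrow> nat set" where
  "mvars P = \<Union> (Poly_Mapping.keys ` Poly_Mapping.keys P)"

definition mtdeg :: "(nat \<Rightarrow>\<^sub>0 nat) \<Rightarrow> nat" where
  "mtdeg m = sum (Poly_Mapping.lookup m) (Poly_Mapping.keys m)"

definition alg_pure :: "('a::comm_ring_1 \<Rightarrow> 'b::comm_ring_1) \<Rightarrow> bool" where
  "alg_pure \<phi> \<longleftrightarrow>
     (\<forall>F :: 'a mpoly set. finite F \<longrightarrow>
        (\<exists>b :: nat \<Rightarrow> 'b. \<forall>P\<in>F. mpeval (Poly_Mapping.map \<phi> P) b = 0) \<longrightarrow>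
        (\<exists>a :: nat \<Rightarrow> 'a. \<forall>P\<in>F. mpeval P a = 0))"

text \<open>K[x_J]_(x_J), as a subring of the fraction field of K[x].\<close>
definition loc_ring :: "nat set \<Rightarrow> 'a::field mpoly fract set" where
  "loc_ring J = {Fraction_Field.Fract a d | a d. mvars a \<subseteq> J \<and> mvars d \<subseteq> J \<and> Poly_Mapping.lookup d 0 \<noteq> 0}"

definition loc_ideal_pow :: "nat set \<Rightarrow> nat \<Rightarrow> 'a::field mpoly fract set" where
  "loc_ideal_pow J k = {Fraction_Field.Fract a d | a d. mvars a \<subseteq> J \<and> mvars d \<subseteq> J \<and> Poly_Mapping.lookup d 0 \<noteq> 0
                          \<and> (\<forall>m\<in>Poly_Mapping.keys a. k \<le> mtdeg m)}"

text \<open>Order w.r.t. the maximal ideal: the largest k with g in (x_J)^k (infinity for g = 0).\<close>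
definition loc_ord :: "nat set \<Rightarrow> 'a::field mpoly fract \<Rightarrow> enat" where
  "loc_ord J g = Sup {enat k | k. g \<in> loc_ideal_pow J k}"

definition fract_map :: "('a::field \<Rightarrow> 'b::field) \<Rightarrow> 'a mpoly fract \<Rightarrow> 'b mpoly fract" where
  "fract_map \<phi> q = (let (a, d) = (SOME (a, d). d \<noteq> 0 \<and> q = Fraction_Field.Fract a d)
                     in Fraction_Field.Fract (Poly_Mapping.map \<phi> a) (Poly_Mapping.map \<phi> d))"

end

theory Submission
  imports Defs "HOL-Library.Countable"
begin

text \<open>Write \<open>yhat i = A\<^sub>i / D\<^sub>i\<close> with polynomials over K' and \<open>D\<^sub>i(0) \<noteq> 0\<close>.
  Clearing denominators turns \<open>f(yhat) = 0\<close> into polynomial identities in the \<open>A\<^sub>i\<close>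
  and \<open>D\<^sub>i\<close>. Replace every coefficient of every \<open>A\<^sub>i\<close> and \<open>D\<^sub>i\<close> by an unknown and
  compare coefficients of the monomials in x: this is a finite polynomial system over K with a
  solution in K'. Further unknowns \<open>t\<close> with \<open>c t = 1\<close> keep nonzero both the constant term of
  \<open>D\<^sub>i\<close> and the coefficient of a monomial of least degree in \<open>A\<^sub>i\<close>. Purity yields a solution
  over K, i.e. fractions over K whose numerators and denominators have supports inside those of
  \<open>A\<^sub>i\<close> and \<open>D\<^sub>i\<close>; so they lie in the same local rings, and the preserved monomial of least
  degree gives them the same orders.\<close>

locale ring_hom =
  fixes h :: "'r::comm_ring_1 \<Rightarrow> 's::comm_ring_1"
  assumes hom_add: "h (a + b) = h a + h b"
    and hom_mult: "h (a * b) = h a * h b"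
    and hom_one: "h 1 = 1"
begin

lemma hom_zero: "h 0 = 0"
  using hom_add[of 0 0] by simp

lemma hom_uminus: "h (- a) = - h a"
  using hom_add[of a "- a"] by (simp add: hom_zero eq_neg_iff_add_eq_0 add.commute)

lemma hom_diff: "h (a - b) = h a - h b"
  using hom_add[of a "- b"] by (simp add: hom_uminus)

lemma hom_sum: "h (sum f S) = (\<Sum>x\<in>S. h (f x))"
  by (induction S rule: infinite_finite_induct) (auto simp: hom_zero hom_add)

lemma hom_prod: "h (prod f S) = (\<Prod>x\<in>S. h (f x))"
  by (induction S rule: infinite_finite_induct) (auto simp: hom_one hom_mult)

lemma hom_power: "h (a ^ k) = h a ^ k"
  by (induction k) (auto simp: hom_one hom_mult)

end

lemma ring_hom_id: "ring_hom (\<lambda>x. x)"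
  by standard simp_all

lemma ring_hom_comp: "ring_hom f \<Longrightarrow> ring_hom g \<Longrightarrow> ring_hom (g \<circ> f)"
  by (simp add: ring_hom_def)

lemma ring_hom_nonzero:
  fixes h :: "'a::field \<Rightarrow> 'b::field"
  assumes "ring_hom h" and "x \<noteq> 0"
  shows "h x \<noteq> 0"
proof
  assume "h x = 0"
  then have "h (x * inverse x) = 0" using ring_hom.hom_mult[OF assms(1)] by simp
  with assms show False by (simp add: ring_hom.hom_one)
qed

lemma lookup_map: "f 0 = 0 \<Longrightarrow> Poly_Mapping.lookup (Poly_Mapping.map f p) k = f (Poly_Mapping.lookup p k)"
  by transfer (auto simp: when_def)

lemma lookup_map_keys:
  "k \<in> Poly_Mapping.keys p \<Longrightarrow> Poly_Mapping.lookup (Poly_Mapping.map f p) k = f (Poly_Mapping.lookup p k)"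
  by transfer (auto simp: when_def)

lemma keys_map_subset: "Poly_Mapping.keys (Poly_Mapping.map f p) \<subseteq> Poly_Mapping.keys p"
  by transfer (auto simp: when_def)

lemma map_map_zero_preserving:
  "f 0 = 0 \<Longrightarrow> g 0 = 0 \<Longrightarrow> Poly_Mapping.map g (Poly_Mapping.map f p) = Poly_Mapping.map (g \<circ> f) p"
  by (rule poly_mapping_eqI) (simp add: lookup_map)

lemma map_ident: "Poly_Mapping.map (\<lambda>x. x) = (\<lambda>p. p)"
  by (rule ext, rule poly_mapping_eqI) (simp add: lookup_map)

definition poly_of_coeffs :: "'k set \<Rightarrow> ('k \<Rightarrow> 'c::comm_monoid_add) \<Rightarrow> 'k \<Rightarrow>\<^sub>0 'c" where
  "poly_of_coeffs S c = (\<Sum>s\<in>S. Poly_Mapping.single s (c s))"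

lemma lookup_poly_of_coeffs:
  "finite S \<Longrightarrow> Poly_Mapping.lookup (poly_of_coeffs S c) t = (if t \<in> S then c t else 0)"
  by (simp add: poly_of_coeffs_def lookup_sum lookup_single when_def)

lemma keys_poly_of_coeffs: "finite S \<Longrightarrow> Poly_Mapping.keys (poly_of_coeffs S c) \<subseteq> S"
  by (auto simp: in_keys_iff lookup_poly_of_coeffs split: if_splits)

lemma poly_of_coeffs_lookup: "poly_of_coeffs (Poly_Mapping.keys p) (Poly_Mapping.lookup p) = p"
  by (rule poly_mapping_eqI) (simp add: lookup_poly_of_coeffs in_keys_iff)

lemma (in ring_hom) map_poly_of_coeffs:
  "Poly_Mapping.map h (poly_of_coeffs S c) = poly_of_coeffs S (h \<circ> c)"
proof (cases "finite S")
  case True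
  then show ?thesis
    by (intro poly_mapping_eqI) (simp add: lookup_map hom_zero lookup_poly_of_coeffs)
qed (simp add: poly_of_coeffs_def map_eq_zero_iff)

lemma times_poly_mapping_expand:
  fixes p q :: "'k::comm_monoid_add \<Rightarrow>\<^sub>0 'r::comm_semiring_1"
  shows "p * q = (\<Sum>s\<in>Poly_Mapping.keys p. \<Sum>t\<in>Poly_Mapping.keys q.
     Poly_Mapping.single (s + t) (Poly_Mapping.lookup p s * Poly_Mapping.lookup q t))"
proof -
  have "p * q = poly_of_coeffs (Poly_Mapping.keys p) (Poly_Mapping.lookup p) *
      poly_of_coeffs (Poly_Mapping.keys q) (Poly_Mapping.lookup q)"
    by (simp only: poly_of_coeffs_lookup)
  also have "\<dots> = (\<Sum>s\<in>Poly_Mapping.keys p. \<Sum>t\<in>Poly_Mapping.keys q.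
      Poly_Mapping.single s (Poly_Mapping.lookup p s) * Poly_Mapping.single t (Poly_Mapping.lookup q t))"
    by (simp only: poly_of_coeffs_def sum_product)
  finally show ?thesis
    by (simp only: mult_single)
qed

lemma (in ring_hom) map_add:
  "Poly_Mapping.map h (p + q) = Poly_Mapping.map h p + Poly_Mapping.map h q"
  by (rule poly_mapping_eqI) (simp add: lookup_map hom_zero lookup_add hom_add)

lemma (in ring_hom) map_zero: "Poly_Mapping.map h 0 = 0"
  by (simp add: map_eq_zero_iff)

lemma (in ring_hom) map_sum: "Poly_Mapping.map h (sum f S) = (\<Sum>x\<in>S. Poly_Mapping.map h (f x))"
  by (induction S rule: infinite_finite_induct) (auto simp: map_add map_zero)

lemma (in ring_hom) map_mult:
  fixes p q :: "'k::comm_monoid_add \<Rightarrow>\<^sub>0 'r"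
  shows "Poly_Mapping.map h (p * q) = Poly_Mapping.map h p * Poly_Mapping.map h q"
proof -
  have "Poly_Mapping.map h (p * q) = (\<Sum>s\<in>Poly_Mapping.keys p. \<Sum>t\<in>Poly_Mapping.keys q.
      Poly_Mapping.single (s + t) (h (Poly_Mapping.lookup p s) * h (Poly_Mapping.lookup q t)))"
    unfolding times_poly_mapping_expand[of p q] by (simp add: map_sum hom_zero hom_mult)
  also have "\<dots> = poly_of_coeffs (Poly_Mapping.keys p) (h \<circ> Poly_Mapping.lookup p) *
      poly_of_coeffs (Poly_Mapping.keys q) (h \<circ> Poly_Mapping.lookup q)"
    by (simp only: poly_of_coeffs_def sum_product mult_single o_def)
  also have "\<dots> = Poly_Mapping.map h p * Poly_Mapping.map h q"
    by (simp only: map_poly_of_coeffs[symmetric] poly_of_coeffs_lookup)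
  finally show ?thesis .
qed

lemma ring_hom_map:
  fixes h :: "'r::comm_ring_1 \<Rightarrow> 's::comm_ring_1"
  assumes "ring_hom h"
  shows "ring_hom (Poly_Mapping.map h :: ('k::comm_monoid_add \<Rightarrow>\<^sub>0 'r) \<Rightarrow> ('k \<Rightarrow>\<^sub>0 's))"
proof -
  interpret ring_hom h by (fact assms)
  show ?thesis
  proof
    show "Poly_Mapping.map h 1 = 1"
      by (rule poly_mapping_eqI) (simp add: lookup_map hom_zero lookup_one when_def hom_one)
  qed (fact map_add map_mult)+
qed

definition monom_eval :: "(nat \<Rightarrow>\<^sub>0 nat) \<Rightarrow> (nat \<Rightarrow> 'r::comm_semiring_1) \<Rightarrow> 'r" where
  "monom_eval m a = (\<Prod>i\<in>Poly_Mapping.keys m. a i ^ Poly_Mapping.lookup m i)"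

lemma mpeval_monom_eval: "mpeval P a = (\<Sum>m\<in>Poly_Mapping.keys P. Poly_Mapping.lookup P m * monom_eval m a)"
  by (simp add: mpeval_def monom_eval_def)

lemma monom_eval_superset: "finite S \<Longrightarrow> Poly_Mapping.keys m \<subseteq> S \<Longrightarrow>
   monom_eval m a = (\<Prod>i\<in>S. a i ^ Poly_Mapping.lookup m i)"
  unfolding monom_eval_def by (rule prod.mono_neutral_left) (auto simp: in_keys_iff)

lemma mpeval_superset: "finite S \<Longrightarrow> Poly_Mapping.keys P \<subseteq> S \<Longrightarrow>
   mpeval P a = (\<Sum>m\<in>S. Poly_Mapping.lookup P m * monom_eval m a)"
  unfolding mpeval_monom_eval by (rule sum.mono_neutral_left) (auto simp: in_keys_iff)

lemma monom_eval_add: "monom_eval (s + t) a = monom_eval s a * monom_eval t a"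
proof -
  let ?S = "Poly_Mapping.keys s \<union> Poly_Mapping.keys t"
  have "monom_eval (s + t) a = (\<Prod>i\<in>?S. a i ^ Poly_Mapping.lookup (s + t) i)"
    by (rule monom_eval_superset) (auto dest: subsetD[OF keys_add])
  also have "\<dots> = (\<Prod>i\<in>?S. a i ^ Poly_Mapping.lookup s i) * (\<Prod>i\<in>?S. a i ^ Poly_Mapping.lookup t i)"
    by (simp add: lookup_add power_add prod.distrib)
  finally show ?thesis
    using monom_eval_superset[of ?S s a] monom_eval_superset[of ?S t a] by simp
qed

lemma monom_eval_zero [simp]: "monom_eval 0 a = 1"
  by (simp add: monom_eval_def)

lemma mpeval_add: "mpeval (P + Q) a = mpeval P a + mpeval Q a"
proof -
  let ?S = "Poly_Mapping.keys P \<union> Poly_Mapping.keys Q"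
  have "mpeval (P + Q) a = (\<Sum>m\<in>?S. Poly_Mapping.lookup (P + Q) m * monom_eval m a)"
    by (rule mpeval_superset) (auto dest: subsetD[OF keys_add])
  then show ?thesis
    by (simp add: mpeval_superset[of ?S P a] mpeval_superset[of ?S Q a] lookup_add distrib_right sum.distrib)
qed

lemma mpeval_single: "mpeval (Poly_Mapping.single s c) a = c * monom_eval s a"
  by (cases "c = 0") (simp_all add: mpeval_monom_eval)

lemma mpeval_zero [simp]: "mpeval 0 a = 0"
  by (simp add: mpeval_def)

lemma mpeval_sum: "mpeval (sum f S) a = (\<Sum>x\<in>S. mpeval (f x) a)"
  by (induction S rule: infinite_finite_induct) (simp_all add: mpeval_add)

lemma mpeval_mult: "mpeval (P * Q) a = mpeval P a * mpeval Q a"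
proof -
  have "mpeval (P * Q) a = (\<Sum>s\<in>Poly_Mapping.keys P. \<Sum>t\<in>Poly_Mapping.keys Q.
      (Poly_Mapping.lookup P s * monom_eval s a) * (Poly_Mapping.lookup Q t * monom_eval t a))"
    unfolding times_poly_mapping_expand[of P Q]
    by (simp only: mpeval_sum mpeval_single monom_eval_add mult_ac)
  also have "\<dots> = mpeval P a * mpeval Q a"
    by (simp only: mpeval_monom_eval sum_product)
  finally show ?thesis .
qed

lemma ring_hom_mpeval: "ring_hom (\<lambda>P. mpeval P (a :: nat \<Rightarrow> 'r::comm_ring_1))"
  by standard (simp_all only: mpeval_add mpeval_mult, simp add: mpeval_monom_eval)

lemma mpeval_hom:
  assumes "ring_hom g"
  shows "g (mpeval P a) = mpeval (Poly_Mapping.map g P) (g \<circ> a)"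
proof -
  interpret ring_hom g by (fact assms)
  have "mpeval (Poly_Mapping.map g P) (g \<circ> a) =
      (\<Sum>m\<in>Poly_Mapping.keys P. Poly_Mapping.lookup (Poly_Mapping.map g P) m * monom_eval m (g \<circ> a))"
    by (rule mpeval_superset[OF finite_keys keys_map_subset])
  also have "\<dots> = g (mpeval P a)"
    by (simp add: mpeval_monom_eval monom_eval_def lookup_map_keys hom_sum hom_mult hom_prod hom_power)
  finally show ?thesis ..
qed

definition mpconst :: "'r::zero \<Rightarrow> 'r mpoly" where
  "mpconst c = Poly_Mapping.single 0 c"

definition mpvar :: "nat \<Rightarrow> 'r::{zero, one} mpoly" where
  "mpvar i = Poly_Mapping.single (Poly_Mapping.single i 1) 1"

lemma mpeval_mpconst [simp]: "mpeval (mpconst c) a = c"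
  by (simp add: mpconst_def mpeval_single monom_eval_def)

lemma mpeval_mpvar [simp]: "mpeval (mpvar i) a = a i"
  by (simp add: mpvar_def mpeval_single monom_eval_def)

lemma (in ring_hom) map_mpconst [simp]: "Poly_Mapping.map h (mpconst c) = mpconst (h c)"
  by (simp add: mpconst_def hom_zero)

lemma (in ring_hom) map_mpvar [simp]: "Poly_Mapping.map h (mpvar i) = mpvar i"
  by (simp add: mpvar_def hom_zero hom_one)

section \<open>Descent of polynomial solutions along an algebraically pure map\<close>

instance poly_mapping :: ("{linorder, countable}", "{zero, countable}") countable
proof (rule countable_classI[of "\<lambda>m. to_nat (map (\<lambda>k. (k, Poly_Mapping.lookup m k))
    (sorted_list_of_set (Poly_Mapping.keys m)))"])
  fix m m' :: "'a \<Rightarrow>\<^sub>0 'b"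
  assume "to_nat (map (\<lambda>k. (k, Poly_Mapping.lookup m k)) (sorted_list_of_set (Poly_Mapping.keys m))) =
    to_nat (map (\<lambda>k. (k, Poly_Mapping.lookup m' k)) (sorted_list_of_set (Poly_Mapping.keys m')))"
  then have graph: "(\<lambda>k. (k, Poly_Mapping.lookup m k)) ` Poly_Mapping.keys m =
      (\<lambda>k. (k, Poly_Mapping.lookup m' k)) ` Poly_Mapping.keys m'"
    by (metis (no_types, lifting) finite_keys list.set_map set_sorted_list_of_set to_nat_split)
  then have keys: "Poly_Mapping.keys m = Poly_Mapping.keys m'"
    by (metis (no_types, lifting) fst_conv image_cong image_image image_ident)
  show "m = m'"
  proof (rule poly_mapping_eqI)
    fix k
    show "Poly_Mapping.lookup m k = Poly_Mapping.lookup m' k"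
    proof (cases "k \<in> Poly_Mapping.keys m")
      case True
      then show ?thesis using graph by auto
    next
      case False
      then show ?thesis using keys by (metis in_keys_iff)
    qed
  qed
qed

text \<open>Unknown \<open>to_nat (j, s, False)\<close> stands for the coefficient of the monomial \<open>s\<close> in the
  \<open>j\<close>-th polynomial unknown, and \<open>to_nat (j, s, True)\<close> for its inverse; the equations
  \<open>c * c' - 1 = 0\<close> force the coefficients indexed by \<open>Z\<close> to be nonzero.\<close>

definition generic_poly :: "nat \<Rightarrow> (nat \<Rightarrow>\<^sub>0 nat) set \<Rightarrow> 'r::comm_ring_1 mpoly mpoly" where
  "generic_poly j S = poly_of_coeffs S (\<lambda>s. mpvar (to_nat (j, s, False)))"

definition generic_eval :: "(nat \<Rightarrow> 'b::zero mpoly) \<Rightarrow> 'a::comm_ring_1 mpoly mpoly \<Rightarrow> 'a mpoly mpoly" where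
  "generic_eval Y P = mpeval (Poly_Mapping.map (Poly_Mapping.map mpconst) P)
     (\<lambda>j. generic_poly j (Poly_Mapping.keys (Y j)))"

definition generic_system ::
    "'a::comm_ring_1 mpoly mpoly set \<Rightarrow> (nat \<times> (nat \<Rightarrow>\<^sub>0 nat)) set \<Rightarrow> (nat \<Rightarrow> 'b::zero mpoly) \<Rightarrow> 'a mpoly set" where
  "generic_system G Z Y =
     (\<Union>P\<in>G. Poly_Mapping.lookup (generic_eval Y P) ` Poly_Mapping.keys (generic_eval Y P)) \<union>
     (\<lambda>(j, s). mpvar (to_nat (j, s, False)) * mpvar (to_nat (j, s, True)) - 1) ` Z"

lemma finite_generic_system: "finite G \<Longrightarrow> finite Z \<Longrightarrow> finite (generic_system G Z Y)"
  by (simp add: generic_system_def)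

lemma map_generic_eval:
  fixes h :: "'a::comm_ring_1 mpoly \<Rightarrow> 'r::comm_ring_1" and \<psi> :: "'a \<Rightarrow> 'r"
  assumes h: "ring_hom h" and \<psi>: "ring_hom \<psi>" and h_const: "\<And>c. h (mpconst c) = \<psi> c"
  shows "Poly_Mapping.map h (generic_eval Y P) = mpeval (Poly_Mapping.map (Poly_Mapping.map \<psi>) P)
      (\<lambda>j. poly_of_coeffs (Poly_Mapping.keys (Y j)) (\<lambda>s. h (mpvar (to_nat (j, s, False)))))"
proof -
  interpret h: ring_hom h by (fact h)
  have comp: "Poly_Mapping.map h (Poly_Mapping.map mpconst q) = Poly_Mapping.map \<psi> q" for q :: "'a mpoly"
    by (simp add: map_map_zero_preserving mpconst_def h.hom_zero o_def h_const[unfolded mpconst_def])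
  have "Poly_Mapping.map (Poly_Mapping.map h) (Poly_Mapping.map (Poly_Mapping.map mpconst) P) =
      Poly_Mapping.map (Poly_Mapping.map \<psi>) P"
    by (rule poly_mapping_eqI) (simp add: lookup_map map_eq_zero_iff comp)
  then show ?thesis
    by (simp add: generic_eval_def mpeval_hom[OF ring_hom_map[OF h]] o_def generic_poly_def
        h.map_poly_of_coeffs)
qed

lemma generic_system_solvable:
  fixes \<phi> :: "'a::comm_ring_1 \<Rightarrow> 'b::field" and Y :: "nat \<Rightarrow> 'b mpoly"
  assumes \<phi>: "ring_hom \<phi>"
    and sol: "\<And>P. P \<in> G \<Longrightarrow> mpeval (Poly_Mapping.map (Poly_Mapping.map \<phi>) P) Y = 0"
    and nonzero: "\<And>j s. (j, s) \<in> Z \<Longrightarrow> Poly_Mapping.lookup (Y j) s \<noteq> 0"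
  shows "\<exists>b. \<forall>g\<in>generic_system G Z Y. mpeval (Poly_Mapping.map \<phi> g) b = 0"
proof -
  define b :: "nat \<Rightarrow> 'b" where
    "b v = (case from_nat v of (j, s, is_inverse) \<Rightarrow>
      if is_inverse then inverse (Poly_Mapping.lookup (Y j) s) else Poly_Mapping.lookup (Y j) s)" for v
  define hb where "hb q = mpeval (Poly_Mapping.map \<phi> q) b" for q
  have hb: "ring_hom hb"
    using ring_hom_comp[OF ring_hom_map[OF \<phi>] ring_hom_mpeval[of b]] by (simp add: hb_def[abs_def] o_def)
  have hb_mpvar: "hb (mpvar v) = b v" for v
    by (simp add: hb_def ring_hom.map_mpvar[OF \<phi>])
  have "hb g = 0" if "g \<in> generic_system G Z Y" for g
    using that unfolding generic_system_def
  proof (elim UnE UN_E imageE)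
    fix P \<mu> assume "P \<in> G" and g: "g = Poly_Mapping.lookup (generic_eval Y P) \<mu>"
    have "poly_of_coeffs (Poly_Mapping.keys (Y j)) (\<lambda>s. hb (mpvar (to_nat (j, s, False)))) = Y j" for j
      by (simp add: hb_mpvar b_def poly_of_coeffs_lookup)
    then have "Poly_Mapping.map hb (generic_eval Y P) = 0"
      by (simp add: map_generic_eval[OF hb \<phi>] hb_def ring_hom.map_mpconst[OF \<phi>] sol[OF \<open>P \<in> G\<close>])
    then show "hb g = 0"
      by (metis g lookup_map lookup_zero ring_hom.hom_zero[OF hb])
  next
    fix z assume "z \<in> Z" and g: "g = (\<lambda>(j, s). mpvar (to_nat (j, s, False)) * mpvar (to_nat (j, s, True)) - 1) z"
    obtain j s where z: "z = (j, s)" by (cases z)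
    show "hb g = 0"
      using nonzero[of j s] \<open>z \<in> Z\<close>
      by (simp add: g z ring_hom.hom_diff[OF hb] ring_hom.hom_mult[OF hb] ring_hom.hom_one[OF hb] hb_mpvar b_def)
  qed
  then show ?thesis
    unfolding hb_def by blast
qed

lemma generic_system_solution:
  fixes a :: "nat \<Rightarrow> 'a::comm_ring_1" and Y :: "nat \<Rightarrow> 'b::zero mpoly"
  assumes a: "\<And>g. g \<in> generic_system G Z Y \<Longrightarrow> mpeval g a = 0"
  defines "Ya \<equiv> \<lambda>j. poly_of_coeffs (Poly_Mapping.keys (Y j)) (\<lambda>s. a (to_nat (j, s, False)))"
  shows "\<And>P. P \<in> G \<Longrightarrow> mpeval P Ya = 0"
    and "\<And>j s. (j, s) \<in> Z \<Longrightarrow> a (to_nat (j, s, False)) \<noteq> 0"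
proof -
  define ha where "ha q = mpeval q a" for q
  have ha: "ring_hom ha"
    unfolding ha_def by (rule ring_hom_mpeval)
  fix P assume "P \<in> G"
  have "Poly_Mapping.map ha (generic_eval Y P) = mpeval P Ya"
    using map_generic_eval[OF ha ring_hom_id] by (simp add: ha_def Ya_def map_ident)
  moreover have "Poly_Mapping.map ha (generic_eval Y P) = 0"
    using a \<open>P \<in> G\<close> by (auto simp: map_eq_zero_iff generic_system_def ha_def)
  ultimately show "mpeval P Ya = 0"
    by simp
next
  fix j s assume "(j, s) \<in> Z"
  then have "mpeval (mpvar (to_nat (j, s, False)) * mpvar (to_nat (j, s, True)) - 1) a = 0"
    by (intro a) (force simp: generic_system_def)
  then have "a (to_nat (j, s, False)) * a (to_nat (j, s, True)) = 1"
    by (simp add: mpeval_mult ring_hom.hom_diff[OF ring_hom_mpeval] ring_hom.hom_one[OF ring_hom_mpeval])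
  then show "a (to_nat (j, s, False)) \<noteq> 0"
    by auto
qed

theorem alg_pure_poly_solution:
  fixes \<phi> :: "'a::comm_ring_1 \<Rightarrow> 'b::field" and G :: "'a mpoly mpoly set" and Y :: "nat \<Rightarrow> 'b mpoly"
  assumes \<phi>: "ring_hom \<phi>" and pure: "alg_pure \<phi>" and "finite G" and "finite Z"
    and sol: "\<And>P. P \<in> G \<Longrightarrow> mpeval (Poly_Mapping.map (Poly_Mapping.map \<phi>) P) Y = 0"
    and nonzero: "\<And>j s. (j, s) \<in> Z \<Longrightarrow> Poly_Mapping.lookup (Y j) s \<noteq> 0"
  obtains Ya :: "nat \<Rightarrow> 'a mpoly"
  where "\<And>P. P \<in> G \<Longrightarrow> mpeval P Ya = 0"
    and "\<And>j. Poly_Mapping.keys (Ya j) \<subseteq> Poly_Mapping.keys (Y j)"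
    and "\<And>j s. (j, s) \<in> Z \<Longrightarrow> Poly_Mapping.lookup (Ya j) s \<noteq> 0"
proof -
  have "\<exists>a. \<forall>g\<in>generic_system G Z Y. mpeval g a = 0"
    using pure generic_system_solvable[where G = G and Z = Z, OF \<phi> sol nonzero] finite_generic_system[OF assms(3,4), of Y]
    by (simp add: alg_pure_def)
  then obtain a where a: "\<forall>g\<in>generic_system G Z Y. mpeval g a = 0" ..
  define Ya where "Ya j = poly_of_coeffs (Poly_Mapping.keys (Y j)) (\<lambda>s. a (to_nat (j, s, False)))" for j
  show thesis
  proof
    show "mpeval P Ya = 0" if "P \<in> G" for P
      using generic_system_solution(1)[of G Z Y a P] a that by (simp add: Ya_def[abs_def])
    show "Poly_Mapping.keys (Ya j) \<subseteq> Poly_Mapping.keys (Y j)" for j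
      unfolding Ya_def by (rule keys_poly_of_coeffs[OF finite_keys])
    show "Poly_Mapping.lookup (Ya j) s \<noteq> 0" if "(j, s) \<in> Z" for j s
      using generic_system_solution(2)[of G Z Y a j s] a nonzero[OF that] that
      by (auto simp: Ya_def lookup_poly_of_coeffs in_keys_iff)
  qed
qed

section \<open>Clearing denominators\<close>

text \<open>The unknowns \<open>w (2 * i)\<close> and \<open>w (2 * i + 1)\<close> stand for the numerator and the
  denominator of the \<open>i\<close>-th argument: \<open>clear_denoms S \<alpha> \<delta> N\<close> evaluates to
  \<open>\<Sum>m\<in>S. \<alpha> m / \<delta> m * \<Prod>i. (w (2 * i) / w (2 * i + 1)) ^ m i\<close>, multiplied by all
  the \<open>\<delta> m\<close> and by every \<open>w (2 * i + 1) ^ N\<close> (see \<open>mpeval_clear_denoms_field\<close>).\<close>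

definition clear_denoms ::
    "(nat \<Rightarrow>\<^sub>0 nat) set \<Rightarrow> ((nat \<Rightarrow>\<^sub>0 nat) \<Rightarrow> 'r::comm_ring_1) \<Rightarrow> ((nat \<Rightarrow>\<^sub>0 nat) \<Rightarrow> 'r) \<Rightarrow> nat \<Rightarrow> 'r mpoly" where
  "clear_denoms S \<alpha> \<delta> N = (\<Sum>m\<in>S. mpconst (\<alpha> m * (\<Prod>m'\<in>S - {m}. \<delta> m')) *
     (\<Prod>i\<in>\<Union> (Poly_Mapping.keys ` S).
        mpvar (2 * i) ^ Poly_Mapping.lookup m i * mpvar (2 * i + 1) ^ (N - Poly_Mapping.lookup m i)))"

lemma map_clear_denoms:
  assumes "ring_hom h"
  shows "Poly_Mapping.map h (clear_denoms S \<alpha> \<delta> N) = clear_denoms S (h \<circ> \<alpha>) (h \<circ> \<delta>) N"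
proof -
  interpret h: ring_hom h by (fact assms)
  interpret H: ring_hom "Poly_Mapping.map h" by (rule ring_hom_map[OF assms])
  show ?thesis
    by (simp add: clear_denoms_def H.hom_sum H.hom_mult H.hom_prod H.hom_power h.hom_mult h.hom_prod)
qed

lemma mpeval_clear_denoms:
  "mpeval (clear_denoms S \<alpha> \<delta> N) w = (\<Sum>m\<in>S. \<alpha> m * (\<Prod>m'\<in>S - {m}. \<delta> m') *
     (\<Prod>i\<in>\<Union> (Poly_Mapping.keys ` S).
        w (2 * i) ^ Poly_Mapping.lookup m i * w (2 * i + 1) ^ (N - Poly_Mapping.lookup m i)))"
proof -
  interpret ring_hom "\<lambda>P. mpeval P w" by (rule ring_hom_mpeval)
  show ?thesis
    by (simp add: clear_denoms_def hom_sum mpeval_mult hom_prod hom_power)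
qed

lemma monom_eval_quotients_mult:
  fixes w :: "nat \<Rightarrow> 'f::field"
  assumes "finite V" "Poly_Mapping.keys m \<subseteq> V"
    and w: "\<And>i. i \<in> V \<Longrightarrow> w (2 * i + 1) \<noteq> 0" and N: "\<And>i. Poly_Mapping.lookup m i \<le> N"
  shows "monom_eval m (\<lambda>i. w (2 * i) / w (2 * i + 1)) * (\<Prod>i\<in>V. w (2 * i + 1) ^ N) =
    (\<Prod>i\<in>V. w (2 * i) ^ Poly_Mapping.lookup m i * w (2 * i + 1) ^ (N - Poly_Mapping.lookup m i))"
proof -
  have "(w (2 * i) / w (2 * i + 1)) ^ Poly_Mapping.lookup m i * w (2 * i + 1) ^ N =
      w (2 * i) ^ Poly_Mapping.lookup m i * w (2 * i + 1) ^ (N - Poly_Mapping.lookup m i)"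
    if "i \<in> V" for i
  proof -
    have "w (2 * i + 1) ^ N = w (2 * i + 1) ^ Poly_Mapping.lookup m i * w (2 * i + 1) ^ (N - Poly_Mapping.lookup m i)"
      using N[of i] by (simp add: power_add[symmetric])
    then show ?thesis
      using w[OF that] by (simp add: power_divide)
  qed
  then show ?thesis
    using assms(1,2) by (simp add: monom_eval_superset prod.distrib[symmetric])
qed

lemma mpeval_clear_denoms_field:
  fixes P :: "'f::field mpoly"
  assumes S: "finite S" "Poly_Mapping.keys P \<subseteq> S"
    and coeff: "\<And>m. m \<in> S \<Longrightarrow> Poly_Mapping.lookup P m = \<alpha> m / \<delta> m"
    and \<delta>: "\<And>m. m \<in> S \<Longrightarrow> \<delta> m \<noteq> 0"
    and w: "\<And>i. i \<in> \<Union> (Poly_Mapping.keys ` S) \<Longrightarrow> w (2 * i + 1) \<noteq> 0"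
    and N: "\<And>m i. m \<in> S \<Longrightarrow> Poly_Mapping.lookup m i \<le> N"
  shows "mpeval (clear_denoms S \<alpha> \<delta> N) w = mpeval P (\<lambda>i. w (2 * i) / w (2 * i + 1)) *
    ((\<Prod>m\<in>S. \<delta> m) * (\<Prod>i\<in>\<Union> (Poly_Mapping.keys ` S). w (2 * i + 1) ^ N))"
proof -
  let ?V = "\<Union> (Poly_Mapping.keys ` S)"
  have summand: "\<alpha> m / \<delta> m * monom_eval m (\<lambda>i. w (2 * i) / w (2 * i + 1)) *
      ((\<Prod>m\<in>S. \<delta> m) * (\<Prod>i\<in>?V. w (2 * i + 1) ^ N)) =
    \<alpha> m * (\<Prod>m'\<in>S - {m}. \<delta> m') *
      (\<Prod>i\<in>?V. w (2 * i) ^ Poly_Mapping.lookup m i * w (2 * i + 1) ^ (N - Poly_Mapping.lookup m i))"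
    if m: "m \<in> S" for m
  proof -
    have "(\<Prod>m\<in>S. \<delta> m) = \<delta> m * (\<Prod>m'\<in>S - {m}. \<delta> m')"
      using prod.remove[OF S(1) m] .
    moreover have "monom_eval m (\<lambda>i. w (2 * i) / w (2 * i + 1)) * (\<Prod>i\<in>?V. w (2 * i + 1) ^ N) =
        (\<Prod>i\<in>?V. w (2 * i) ^ Poly_Mapping.lookup m i * w (2 * i + 1) ^ (N - Poly_Mapping.lookup m i))"
      using S(1) m w N[OF m] by (intro monom_eval_quotients_mult) auto
    ultimately show ?thesis
      using \<delta>[OF m] by (simp add: field_simps)
  qed
  have "mpeval P (\<lambda>i. w (2 * i) / w (2 * i + 1)) * ((\<Prod>m\<in>S. \<delta> m) * (\<Prod>i\<in>?V. w (2 * i + 1) ^ N)) =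
      (\<Sum>m\<in>S. \<alpha> m / \<delta> m * monom_eval m (\<lambda>i. w (2 * i) / w (2 * i + 1)) *
        ((\<Prod>m\<in>S. \<delta> m) * (\<Prod>i\<in>?V. w (2 * i + 1) ^ N)))"
    by (simp only: mpeval_superset[OF S] coeff sum_distrib_right cong: sum.cong)
  also have "\<dots> = mpeval (clear_denoms S \<alpha> \<delta> N) w"
    unfolding mpeval_clear_denoms by (rule sum.cong[OF refl]) (rule summand)
  finally show ?thesis ..
qed

lemma ring_hom_Fract_1: "ring_hom (\<lambda>x::'r::idom. Fraction_Field.Fract x 1)"
  by standard (simp_all add: One_fract_def)

lemma Fract_1_eq_0_iff: "Fraction_Field.Fract (x::'r::idom) 1 = 0 \<longleftrightarrow> x = 0"
  by (simp add: Zero_fract_def eq_fract)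

lemma mpeval_Fract_eq_0_iff:
  fixes P :: "'k::field mpoly fract mpoly" and w :: "nat \<Rightarrow> 'k mpoly"
  assumes S: "finite S" "Poly_Mapping.keys P \<subseteq> S"
    and coeff: "\<And>m. m \<in> S \<Longrightarrow> Poly_Mapping.lookup P m = Fraction_Field.Fract (\<alpha> m) (\<delta> m)"
    and \<delta>: "\<And>m. m \<in> S \<Longrightarrow> \<delta> m \<noteq> 0"
    and w: "\<And>i. i \<in> \<Union> (Poly_Mapping.keys ` S) \<Longrightarrow> w (2 * i + 1) \<noteq> 0"
    and N: "\<And>m i. m \<in> S \<Longrightarrow> Poly_Mapping.lookup m i \<le> N"
  shows "mpeval P (\<lambda>i. Fraction_Field.Fract (w (2 * i)) (w (2 * i + 1))) = 0 \<longleftrightarrow>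
    mpeval (clear_denoms S \<alpha> \<delta> N) w = 0"
proof -
  define emb where "emb x = Fraction_Field.Fract x 1" for x :: "'k mpoly"
  have emb: "ring_hom emb"
    unfolding emb_def[abs_def] by (rule ring_hom_Fract_1)
  have emb_eq_0: "emb x = 0 \<longleftrightarrow> x = 0" for x
    by (simp add: emb_def Fract_1_eq_0_iff)
  have "emb (mpeval (clear_denoms S \<alpha> \<delta> N) w) =
      mpeval (clear_denoms S (emb \<circ> \<alpha>) (emb \<circ> \<delta>) N) (emb \<circ> w)"
    by (simp add: mpeval_hom[OF emb] map_clear_denoms[OF emb])
  also have "\<dots> = mpeval P (\<lambda>i. Fraction_Field.Fract (w (2 * i)) (w (2 * i + 1))) *
      ((\<Prod>m\<in>S. emb (\<delta> m)) * (\<Prod>i\<in>\<Union> (Poly_Mapping.keys ` S). emb (w (2 * i + 1)) ^ N))"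
  proof (subst mpeval_clear_denoms_field[OF S])
    show "Poly_Mapping.lookup P m = (emb \<circ> \<alpha>) m / (emb \<circ> \<delta>) m" if "m \<in> S" for m
      using that by (simp add: coeff emb_def)
  qed (use \<delta> w N in \<open>auto simp: emb_def Fract_1_eq_0_iff\<close>)
  finally have eq: "emb (mpeval (clear_denoms S \<alpha> \<delta> N) w) =
      mpeval P (\<lambda>i. Fraction_Field.Fract (w (2 * i)) (w (2 * i + 1))) *
      ((\<Prod>m\<in>S. emb (\<delta> m)) * (\<Prod>i\<in>\<Union> (Poly_Mapping.keys ` S). emb (w (2 * i + 1)) ^ N))" .
  have "finite (\<Union> (Poly_Mapping.keys ` S))"
    using S(1) by simp
  then have "(\<Prod>i\<in>\<Union> (Poly_Mapping.keys ` S). emb (w (2 * i + 1)) ^ N) \<noteq> 0"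
    by (subst prod_zero_iff) (use w in \<open>auto simp: emb_eq_0\<close>)
  moreover have "(\<Prod>m\<in>S. emb (\<delta> m)) \<noteq> 0"
    using S(1) \<delta> by (subst prod_zero_iff) (auto simp: emb_eq_0)
  ultimately show ?thesis
    using eq emb_eq_0[of "mpeval (clear_denoms S \<alpha> \<delta> N) w"] by simp
qed

lemma map_nonzero:
  fixes \<phi> :: "'a::field \<Rightarrow> 'b::field"
  assumes "ring_hom \<phi>" and "q \<noteq> 0"
  shows "Poly_Mapping.map \<phi> q \<noteq> 0"
proof -
  obtain k where "k \<in> Poly_Mapping.keys q"
    using assms(2) by fastforce
  then show ?thesis
    using ring_hom_nonzero[OF assms(1)] by (auto simp: map_eq_zero_iff in_keys_iff)
qed

lemma fract_map_Fract:
  fixes \<phi> :: "'a::field \<Rightarrow> 'b::field"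
  assumes \<phi>: "ring_hom \<phi>" and d: "d \<noteq> 0"
  shows "fract_map \<phi> (Fraction_Field.Fract a d) =
    Fraction_Field.Fract (Poly_Mapping.map \<phi> a) (Poly_Mapping.map \<phi> d)"
proof -
  let ?rep = "\<lambda>(a', d'). d' \<noteq> 0 \<and> Fraction_Field.Fract a d = Fraction_Field.Fract a' d'"
  obtain a' d' where choice: "(SOME x. ?rep x) = (a', d')"
    by (cases "SOME x. ?rep x")
  have "?rep (a, d)" using d by simp
  then have "?rep (SOME x. ?rep x)" by (rule someI)
  then have d': "d' \<noteq> 0" and "a * d' = a' * d"
    using choice d by (auto simp: eq_fract)
  then have "Poly_Mapping.map \<phi> a * Poly_Mapping.map \<phi> d' = Poly_Mapping.map \<phi> a' * Poly_Mapping.map \<phi> d"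
    by (metis ring_hom.map_mult[OF \<phi>])
  then show ?thesis
    using choice map_nonzero[OF \<phi> d] map_nonzero[OF \<phi> d'] by (simp add: fract_map_def eq_fract)
qed

section \<open>Orders in the local rings\<close>

lemma mtdeg_superset: "finite S \<Longrightarrow> Poly_Mapping.keys m \<subseteq> S \<Longrightarrow> mtdeg m = sum (Poly_Mapping.lookup m) S"
  unfolding mtdeg_def by (rule sum.mono_neutral_left) (auto simp: in_keys_iff)

lemma mtdeg_add: "mtdeg (s + t) = mtdeg s + mtdeg t"
proof -
  let ?S = "Poly_Mapping.keys s \<union> Poly_Mapping.keys t"
  have "mtdeg (s + t) = sum (Poly_Mapping.lookup (s + t)) ?S"
    by (rule mtdeg_superset) (auto dest: subsetD[OF keys_add])
  then show ?thesis
    using mtdeg_superset[of ?S s] mtdeg_superset[of ?S t] by (simp add: lookup_add sum.distrib)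
qed

lemma mtdeg_eq_0_iff: "mtdeg t = 0 \<longleftrightarrow> t = 0"
  by (auto simp: mtdeg_def in_keys_iff poly_mapping_eq_iff fun_eq_iff)

lemma lookup_le_mtdeg: "Poly_Mapping.lookup m i \<le> mtdeg m"
  unfolding mtdeg_def
  by (cases "i \<in> Poly_Mapping.keys m") (auto intro: member_le_sum simp: in_keys_iff)

lemma mtdeg_ge_keys_mult:
  fixes A B :: "'r::comm_semiring_1 mpoly"
  assumes "\<And>s. s \<in> Poly_Mapping.keys A \<Longrightarrow> k \<le> mtdeg s" and "u \<in> Poly_Mapping.keys (A * B)"
  shows "k \<le> mtdeg u"
proof -
  obtain s t where "u = s + t" "s \<in> Poly_Mapping.keys A"
    using keys_mult assms(2) by blast
  then show ?thesis
    using assms(1) mtdeg_add[of s t] by fastforce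
qed

lemma lookup_mult_min_mtdeg:
  fixes A B :: "'r::comm_semiring_1 mpoly"
  assumes min: "\<And>s. s \<in> Poly_Mapping.keys A \<Longrightarrow> mtdeg \<mu> \<le> mtdeg s"
  shows "Poly_Mapping.lookup (A * B) \<mu> = Poly_Mapping.lookup A \<mu> * Poly_Mapping.lookup B 0"
proof -
  have summand: "(Poly_Mapping.lookup A s * Poly_Mapping.lookup B t when s + t = \<mu>) =
      (if s = \<mu> then if t = 0 then Poly_Mapping.lookup A s * Poly_Mapping.lookup B t else 0 else 0)"
    if "s \<in> Poly_Mapping.keys A" for s t
  proof (cases "s + t = \<mu>")
    case True
    then have "mtdeg t = 0"
      using min[OF that] mtdeg_add[of s t] by simp
    then show ?thesis
      using True by (simp add: mtdeg_eq_0_iff)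
  qed (auto simp: when_def)
  have "Poly_Mapping.lookup (A * B) \<mu> = (\<Sum>s\<in>Poly_Mapping.keys A. \<Sum>t\<in>Poly_Mapping.keys B.
      Poly_Mapping.lookup A s * Poly_Mapping.lookup B t when s + t = \<mu>)"
    by (simp add: times_poly_mapping_expand[of A B] lookup_sum lookup_single)
  also have "\<dots> = (\<Sum>s\<in>Poly_Mapping.keys A. \<Sum>t\<in>Poly_Mapping.keys B.
      if s = \<mu> then if t = 0 then Poly_Mapping.lookup A s * Poly_Mapping.lookup B t else 0 else 0)"
    by (intro sum.cong refl summand)
  also have "\<dots> = (\<Sum>s\<in>Poly_Mapping.keys A. if s = \<mu> then Poly_Mapping.lookup A s * Poly_Mapping.lookup B 0 else 0)"
    by (intro sum.cong refl) (simp add: in_keys_iff)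
  also have "\<dots> = Poly_Mapping.lookup A \<mu> * Poly_Mapping.lookup B 0"
    by (simp add: in_keys_iff)
  finally show ?thesis .
qed

lemma mvars_mono: "Poly_Mapping.keys P \<subseteq> Poly_Mapping.keys Q \<Longrightarrow> mvars P \<subseteq> mvars Q"
  by (auto simp: mvars_def)

lemma loc_ord_Fract:
  fixes A D :: "'k::field mpoly"
  assumes "mvars A \<subseteq> J" "mvars D \<subseteq> J" "Poly_Mapping.lookup D 0 \<noteq> 0"
    and \<mu>: "\<mu> \<in> Poly_Mapping.keys A" and min: "\<And>s. s \<in> Poly_Mapping.keys A \<Longrightarrow> mtdeg \<mu> \<le> mtdeg s"
  shows "loc_ord J (Fraction_Field.Fract A D) = enat (mtdeg \<mu>)"
proof -
  let ?K = "{enat k |k. Fraction_Field.Fract A D \<in> loc_ideal_pow J k}"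
  have "enat (mtdeg \<mu>) \<in> ?K"
    unfolding loc_ideal_pow_def using assms by blast
  moreover have "x \<le> enat (mtdeg \<mu>)" if x: "x \<in> ?K" for x
  proof -
    obtain k a d where x_eq: "x = enat k" and eq: "Fraction_Field.Fract A D = Fraction_Field.Fract a d"
      and d: "Poly_Mapping.lookup d 0 \<noteq> 0" and k: "\<And>m. m \<in> Poly_Mapping.keys a \<Longrightarrow> k \<le> mtdeg m"
      using x unfolding loc_ideal_pow_def by blast
    have "D \<noteq> 0" "d \<noteq> 0"
      using d assms(3) by auto
    with eq have "A * d = a * D"
      by (simp add: eq_fract)
    moreover have "Poly_Mapping.lookup (A * d) \<mu> \<noteq> 0"
      using lookup_mult_min_mtdeg[where A = A and B = d, OF min] \<mu> d by (simp add: in_keys_iff)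
    ultimately have "\<mu> \<in> Poly_Mapping.keys (a * D)"
      by (simp add: in_keys_iff)
    then show ?thesis
      using mtdeg_ge_keys_mult[OF k] x_eq by auto
  qed
  ultimately show ?thesis
    unfolding loc_ord_def by (intro antisym Sup_least Sup_upper)
qed

lemma loc_ord_zero: "loc_ord J (0 :: 'k::field mpoly fract) = \<infinity>"
proof -
  have "(0 :: 'k mpoly fract) \<in> loc_ideal_pow J k" for k
    unfolding loc_ideal_pow_def
    by (intro CollectI exI[of _ 0] exI[of _ 1]) (simp add: mvars_def fract_collapse)
  then have "enat k \<le> loc_ord J (0 :: 'k mpoly fract)" for k
    unfolding loc_ord_def by (blast intro: Sup_upper)
  then show ?thesis
    using enat_ord_simps(5) not_le by (cases "loc_ord J (0 :: 'k mpoly fract)") force+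
qed

lemma loc_ring_Fract_keys_subset:
  fixes A D :: "'k::zero mpoly" and A' D' :: "'l::field mpoly"
  assumes "mvars A \<subseteq> J" "mvars D \<subseteq> J"
    and "Poly_Mapping.keys A' \<subseteq> Poly_Mapping.keys A" "Poly_Mapping.keys D' \<subseteq> Poly_Mapping.keys D"
    and "Poly_Mapping.lookup D' 0 \<noteq> 0"
  shows "Fraction_Field.Fract A' D' \<in> loc_ring J"
  unfolding loc_ring_def using assms mvars_mono[of A' A] mvars_mono[of D' D]
  by (intro CollectI exI[of _ A'] exI[of _ D'] conjI refl) auto

lemma loc_ord_Fract_keys_subset:
  fixes A D :: "'k::field mpoly" and A' D' :: "'l::field mpoly"
  assumes "mvars A \<subseteq> J" "mvars D \<subseteq> J" "Poly_Mapping.lookup D 0 \<noteq> 0"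
    and "Poly_Mapping.keys A' \<subseteq> Poly_Mapping.keys A" "Poly_Mapping.keys D' \<subseteq> Poly_Mapping.keys D"
    and "Poly_Mapping.lookup D' 0 \<noteq> 0"
    and min_kept: "A \<noteq> 0 \<Longrightarrow> arg_min_on mtdeg (Poly_Mapping.keys A) \<in> Poly_Mapping.keys A'"
  shows "loc_ord J (Fraction_Field.Fract A' D') = loc_ord J (Fraction_Field.Fract A D)"
proof (cases "A = 0")
  case True
  then have "A' = 0"
    using assms(4) by simp
  with True show ?thesis
    by (simp add: fract_collapse loc_ord_zero)
next
  case False
  let ?\<mu> = "arg_min_on mtdeg (Poly_Mapping.keys A)"
  have min: "mtdeg ?\<mu> \<le> mtdeg s" if "s \<in> Poly_Mapping.keys A" for s
    using False that by (intro arg_min_least) auto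
  have "loc_ord J (Fraction_Field.Fract A D) = enat (mtdeg ?\<mu>)"
    using False assms(1-3) min by (intro loc_ord_Fract) (auto intro: arg_min_if_finite)
  moreover have "loc_ord J (Fraction_Field.Fract A' D') = enat (mtdeg ?\<mu>)"
    using False assms min mvars_mono[OF assms(4)] mvars_mono[OF assms(5)] by (intro loc_ord_Fract) auto
  ultimately show ?thesis
    by simp
qed

section \<open>Descent of solutions in the local rings\<close>

lemma fract_representatives:
  obtains num den :: "'r::idom fract \<Rightarrow> 'r"
  where "\<And>q. q = Fraction_Field.Fract (num q) (den q)" and "\<And>q. den q \<noteq> 0"
proof -
  have "\<forall>q :: 'r fract. \<exists>nd. q = Fraction_Field.Fract (fst nd) (snd nd) \<and> snd nd \<noteq> 0"
    by (metis Fract_cases fst_conv snd_conv)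
  from choice[OF this] obtain nd :: "'r fract \<Rightarrow> 'r \<times> 'r"
    where "\<forall>q. q = Fraction_Field.Fract (fst (nd q)) (snd (nd q)) \<and> snd (nd q) \<noteq> 0" ..
  then show thesis
    by (intro that[of "fst \<circ> nd" "snd \<circ> nd"]) (simp_all only: o_def, blast+)
qed

lemma loc_ring_representatives:
  assumes "\<And>i. i \<in> I \<Longrightarrow> y i \<in> loc_ring (J i)"
  obtains A D :: "nat \<Rightarrow> 'k::field mpoly"
  where "\<And>i. y i = Fraction_Field.Fract (A i) (D i)" and "\<And>i. D i \<noteq> 0"
    and "\<And>i. i \<in> I \<Longrightarrow> mvars (A i) \<subseteq> J i \<and> mvars (D i) \<subseteq> J i \<and> Poly_Mapping.lookup (D i) 0 \<noteq> 0"
proof -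
  have "\<exists>ad. y i = Fraction_Field.Fract (fst ad) (snd ad) \<and> snd ad \<noteq> 0 \<and>
      (i \<in> I \<longrightarrow> mvars (fst ad) \<subseteq> J i \<and> mvars (snd ad) \<subseteq> J i \<and> Poly_Mapping.lookup (snd ad) 0 \<noteq> 0)" for i
  proof (cases "i \<in> I")
    case True
    then show ?thesis
      using assms[OF True] unfolding loc_ring_def by fastforce
  next
    case False
    obtain a d where "y i = Fraction_Field.Fract a d" "d \<noteq> 0"
      by (cases "y i")
    with False show ?thesis
      by (intro exI[of _ "(a, d)"]) simp
  qed
  then obtain ad where "\<And>i. y i = Fraction_Field.Fract (fst (ad i)) (snd (ad i)) \<and> snd (ad i) \<noteq> 0 \<and>
      (i \<in> I \<longrightarrow> mvars (fst (ad i)) \<subseteq> J i \<and> mvars (snd (ad i)) \<subseteq> J i \<and> Poly_Mapping.lookup (snd (ad i)) 0 \<noteq> 0)"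
    by metis
  then show thesis
    using that[of "fst \<circ> ad" "snd \<circ> ad"] by simp
qed

definition clear_denoms_poly ::
    "('k::field mpoly fract \<Rightarrow> 'k mpoly) \<Rightarrow> ('k mpoly fract \<Rightarrow> 'k mpoly) \<Rightarrow> 'k mpoly fract mpoly \<Rightarrow> 'k mpoly mpoly" where
  "clear_denoms_poly num den P = clear_denoms (Poly_Mapping.keys P)
     (num \<circ> Poly_Mapping.lookup P) (den \<circ> Poly_Mapping.lookup P) (\<Sum>m\<in>Poly_Mapping.keys P. mtdeg m)"

lemma lookup_le_sum_mtdeg: "m \<in> Poly_Mapping.keys P \<Longrightarrow> Poly_Mapping.lookup m i \<le> (\<Sum>m\<in>Poly_Mapping.keys P. mtdeg m)"
  by (meson finite_keys le_trans lookup_le_mtdeg member_le_sum zero_le)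

lemma mpeval_clear_denoms_poly_eq_0_iff:
  fixes P :: "'k::field mpoly fract mpoly"
  assumes rep: "\<And>q. q = Fraction_Field.Fract (num q) (den q)" "\<And>q. den q \<noteq> 0"
    and w: "\<And>i. i \<in> mvars P \<Longrightarrow> w (2 * i + 1) \<noteq> 0"
  shows "mpeval P (\<lambda>i. Fraction_Field.Fract (w (2 * i)) (w (2 * i + 1))) = 0 \<longleftrightarrow>
    mpeval (clear_denoms_poly num den P) w = 0"
  unfolding clear_denoms_poly_def
  by (rule mpeval_Fract_eq_0_iff)
    (use rep w lookup_le_sum_mtdeg in \<open>auto simp: mvars_def\<close>)

lemma mpeval_map_clear_denoms_poly_eq_0_iff:
  fixes \<phi> :: "'a::field \<Rightarrow> 'b::field" and P :: "'a mpoly fract mpoly"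
  assumes \<phi>: "ring_hom \<phi>"
    and rep: "\<And>q. q = Fraction_Field.Fract (num q) (den q)" "\<And>q. den q \<noteq> 0"
    and w: "\<And>i. i \<in> mvars P \<Longrightarrow> w (2 * i + 1) \<noteq> 0"
  shows "mpeval (Poly_Mapping.map (fract_map \<phi>) P) (\<lambda>i. Fraction_Field.Fract (w (2 * i)) (w (2 * i + 1))) = 0 \<longleftrightarrow>
    mpeval (Poly_Mapping.map (Poly_Mapping.map \<phi>) (clear_denoms_poly num den P)) w = 0"
proof -
  have lookup: "Poly_Mapping.lookup (Poly_Mapping.map (fract_map \<phi>) P) m =
      Fraction_Field.Fract (Poly_Mapping.map \<phi> (num (Poly_Mapping.lookup P m)))
        (Poly_Mapping.map \<phi> (den (Poly_Mapping.lookup P m)))" if "m \<in> Poly_Mapping.keys P" for m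
    using that by (metis lookup_map_keys fract_map_Fract[OF \<phi> rep(2)] rep(1))
  show ?thesis
    unfolding clear_denoms_poly_def map_clear_denoms[OF ring_hom_map[OF \<phi>]]
    by (rule mpeval_Fract_eq_0_iff)
      (use w lookup subsetD[OF keys_map_subset] map_nonzero[OF \<phi> rep(2)] lookup_le_sum_mtdeg in \<open>auto simp: mvars_def\<close>)
qed

theorem alg_pure_fract_solution:
  fixes \<phi> :: "'a::field \<Rightarrow> 'b::field" and F :: "'a mpoly fract mpoly set" and YA YD :: "nat \<Rightarrow> 'b mpoly"
  assumes \<phi>: "ring_hom \<phi>" and pure: "alg_pure \<phi>" and "finite F" and "finite I" and "finite ZA"
    and vars: "\<And>P. P \<in> F \<Longrightarrow> mvars P \<subseteq> I"
    and YD: "\<And>i. i \<in> I \<Longrightarrow> Poly_Mapping.lookup (YD i) 0 \<noteq> 0"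
    and sol: "\<And>P. P \<in> F \<Longrightarrow>
      mpeval (Poly_Mapping.map (fract_map \<phi>) P) (\<lambda>i. Fraction_Field.Fract (YA i) (YD i)) = 0"
    and YA: "\<And>i s. (i, s) \<in> ZA \<Longrightarrow> Poly_Mapping.lookup (YA i) s \<noteq> 0"
  obtains A D :: "nat \<Rightarrow> 'a mpoly"
  where "\<And>P. P \<in> F \<Longrightarrow> mpeval P (\<lambda>i. Fraction_Field.Fract (A i) (D i)) = 0"
    and "\<And>i. Poly_Mapping.keys (A i) \<subseteq> Poly_Mapping.keys (YA i)"
    and "\<And>i. Poly_Mapping.keys (D i) \<subseteq> Poly_Mapping.keys (YD i)"
    and "\<And>i s. (i, s) \<in> ZA \<Longrightarrow> Poly_Mapping.lookup (A i) s \<noteq> 0"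
    and "\<And>i. i \<in> I \<Longrightarrow> Poly_Mapping.lookup (D i) 0 \<noteq> 0"
proof -
  obtain num den :: "'a mpoly fract \<Rightarrow> 'a mpoly"
    where rep: "\<And>q. q = Fraction_Field.Fract (num q) (den q)" "\<And>q. den q \<noteq> 0"
    using fract_representatives[where 'r = "'a mpoly"] by metis
  define Y where "Y v = (if even v then YA (v div 2) else YD (v div 2))" for v
  define Z where "Z = (\<lambda>(i, s). (2 * i, s)) ` ZA \<union> (\<lambda>i. (2 * i + 1, 0)) ` I"
  obtain Ya where sol_Ya: "\<And>P. P \<in> clear_denoms_poly num den ` F \<Longrightarrow> mpeval P Ya = 0"
    and keys: "\<And>j. Poly_Mapping.keys (Ya j) \<subseteq> Poly_Mapping.keys (Y j)"
    and kept: "\<And>j s. (j, s) \<in> Z \<Longrightarrow> Poly_Mapping.lookup (Ya j) s \<noteq> 0"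
  proof (rule alg_pure_poly_solution[OF \<phi> pure])
    show "finite (clear_denoms_poly num den ` F)" "finite Z"
      using assms(3-5) by (simp_all add: Z_def)
    show "mpeval (Poly_Mapping.map (Poly_Mapping.map \<phi>) P) Y = 0" if "P \<in> clear_denoms_poly num den ` F" for P
      using that sol vars YD mpeval_map_clear_denoms_poly_eq_0_iff[OF \<phi> rep, of _ Y]
      by (fastforce simp: Y_def)
    show "Poly_Mapping.lookup (Y j) s \<noteq> 0" if "(j, s) \<in> Z" for j s
      using that YA YD by (auto simp: Z_def Y_def)
  qed (rule that)
  have den: "Poly_Mapping.lookup (Ya (2 * i + 1)) 0 \<noteq> 0" if "i \<in> I" for i
    using kept[of "2 * i + 1" 0] that by (auto simp: Z_def)
  show thesis
  proof (rule that[of "\<lambda>i. Ya (2 * i)" "\<lambda>i. Ya (2 * i + 1)"])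
    show "mpeval P (\<lambda>i. Fraction_Field.Fract (Ya (2 * i)) (Ya (2 * i + 1))) = 0" if "P \<in> F" for P
      using that sol_Ya mpeval_clear_denoms_poly_eq_0_iff[OF rep, of P Ya] vars den by fastforce
    show "Poly_Mapping.keys (Ya (2 * i)) \<subseteq> Poly_Mapping.keys (YA i)"
      "Poly_Mapping.keys (Ya (2 * i + 1)) \<subseteq> Poly_Mapping.keys (YD i)" for i
      using keys[of "2 * i"] keys[of "2 * i + 1"] by (simp_all add: Y_def)
    show "Poly_Mapping.lookup (Ya (2 * i)) s \<noteq> 0" if "(i, s) \<in> ZA" for i s
      using kept[of "2 * i" s] that by (force simp: Z_def)
  qed (fact den)
qed

theorem proposition1p2:

  fixes \<phi> :: "'a::field \<Rightarrow> 'b::field"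
    and n p :: nat
    and J :: "nat \<Rightarrow> nat set"
    and F :: "'a mpoly fract mpoly set"
    and yhat :: "nat \<Rightarrow> 'b mpoly fract"
  assumes hom_add: "\<And>a b. \<phi> (a + b) = \<phi> a + \<phi> b"
    and hom_mult: "\<And>a b. \<phi> (a * b) = \<phi> a * \<phi> b"
    and hom_one: "\<phi> 1 = 1"
    and pure: "alg_pure \<phi>"
    and J_sub: "\<And>i. i \<in> {1..p} \<Longrightarrow> J i \<subseteq> {1..n}"
    and F_fin: "finite F"
    and F_coeffs: "\<And>P m. P \<in> F \<Longrightarrow> m \<in> Poly_Mapping.keys P \<Longrightarrow> Poly_Mapping.lookup P m \<in> loc_ring {1..n}"
    and F_vars: "\<And>P. P \<in> F \<Longrightarrow> mvars P \<subseteq> {1..p}"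
    and yhat_in: "\<And>i. i \<in> {1..p} \<Longrightarrow> yhat i \<in> loc_ring (J i)"
    and yhat_sol: "\<And>P. P \<in> F \<Longrightarrow> mpeval (Poly_Mapping.map (fract_map \<phi>) P) yhat = 0"
  shows "\<exists>y :: nat \<Rightarrow> 'a mpoly fract.
           (\<forall>i\<in>{1..p}. y i \<in> loc_ring (J i) \<and> loc_ord (J i) (y i) = loc_ord (J i) (yhat i))
         \<and> (\<forall>P\<in>F. mpeval P y = 0)"
proof -
  have \<phi>: "ring_hom \<phi>"
    by standard (fact hom_add hom_mult hom_one)+
  obtain YA YD where yhat: "\<And>i. yhat i = Fraction_Field.Fract (YA i) (YD i)"
    and loc: "\<And>i. i \<in> {1..p} \<Longrightarrow> mvars (YA i) \<subseteq> J i \<and> mvars (YD i) \<subseteq> J i \<and> Poly_Mapping.lookup (YD i) 0 \<noteq> 0"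
    using loc_ring_representatives[where I = "{1..p}" and y = yhat, OF yhat_in] by metis
  define ZA where "ZA = (\<lambda>i. (i, arg_min_on mtdeg (Poly_Mapping.keys (YA i)))) ` {i \<in> {1..p}. YA i \<noteq> 0}"
  obtain A D where sol: "\<And>P. P \<in> F \<Longrightarrow> mpeval P (\<lambda>i. Fraction_Field.Fract (A i) (D i)) = 0"
    and keys: "\<And>i. Poly_Mapping.keys (A i) \<subseteq> Poly_Mapping.keys (YA i)"
      "\<And>i. Poly_Mapping.keys (D i) \<subseteq> Poly_Mapping.keys (YD i)"
    and kept: "\<And>i s. (i, s) \<in> ZA \<Longrightarrow> Poly_Mapping.lookup (A i) s \<noteq> 0"
    and den: "\<And>i. i \<in> {1..p} \<Longrightarrow> Poly_Mapping.lookup (D i) 0 \<noteq> 0"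
  proof (rule alg_pure_fract_solution[OF \<phi> pure F_fin _ _ F_vars, of ZA YD YA])
    show "finite {1..p}" "finite ZA"
      by (simp_all add: ZA_def)
    show "Poly_Mapping.lookup (YD i) 0 \<noteq> 0" if "i \<in> {1..p}" for i
      using loc[OF that] by blast
    have "yhat = (\<lambda>i. Fraction_Field.Fract (YA i) (YD i))"
      using yhat by blast
    then show "mpeval (Poly_Mapping.map (fract_map \<phi>) P) (\<lambda>i. Fraction_Field.Fract (YA i) (YD i)) = 0"
      if "P \<in> F" for P
      using yhat_sol[OF that] by simp
    show "Poly_Mapping.lookup (YA i) s \<noteq> 0" if "(i, s) \<in> ZA" for i s
      using that arg_min_if_finite(1)[of "Poly_Mapping.keys (YA i)" mtdeg] by (auto simp: ZA_def in_keys_iff)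
  qed (assumption | rule that)+
  show ?thesis
  proof (intro exI[of _ "\<lambda>i. Fraction_Field.Fract (A i) (D i)"] conjI ballI)
    fix i assume i: "i \<in> {1..p}"
    show "Fraction_Field.Fract (A i) (D i) \<in> loc_ring (J i)"
      using loc[OF i] keys den[OF i] by (intro loc_ring_Fract_keys_subset[where A = "YA i" and D = "YD i"]) auto
    have "arg_min_on mtdeg (Poly_Mapping.keys (YA i)) \<in> Poly_Mapping.keys (A i)" if "YA i \<noteq> 0"
      using kept[of i "arg_min_on mtdeg (Poly_Mapping.keys (YA i))"] i that by (simp add: ZA_def in_keys_iff)
    then show "loc_ord (J i) (Fraction_Field.Fract (A i) (D i)) = loc_ord (J i) (yhat i)"
      unfolding yhat using loc[OF i] keys den[OF i] by (intro loc_ord_Fract_keys_subset) auto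
  qed (use sol in blast)
qed

end
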